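(* For every Lebesgue-measurable set $A\subset[0,1]$ with $\mu(A)>0$, $$E\Big[\int_0^1 \big(X(t) - E[X(t)\mid U\in A]\big)^2\,dt \ \Big|\ U\in A\Big] \ \ge\ \frac{\mu(A)}{6},$$ with equality if $A$ is an interval. Consequently, for every encoder $f$, writing $A_i = \{u\in[0,1]: \text{the realization } t\mapsto t-\mathbf{1}(t\ge u) \text{ is mapped by } f \text{ to } i\}$, one has $D(f)\ge \sum_{i\in\mathbb{N}} \mu(A_i)^2/6$, with equality if every nonempty $A_i$ is an interval.
   Context: $\mu$ denotes Lebesgue measure. Let $U$ be uniformly distributed on $[0,1]$. The sawbridge is the random process $X(t) = t - \mathbf{1}(t\ge U)$, $t\in[0,1]$, viewed as a random element of $L^2[0,1]$. An encoder is a (measurable) map $f:L^2[0,1]\to\mathbb{N}$, with distortion $D(f) = E\big[\int_0^1 (X(t)-E[X(t)\mid f(X)])^2\,dt\big]$. *)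

theory Defs
  imports "HOL-Analysis.Analysis"
begin

text \<open>The realization of the sawbridge for the value u of U:
  t maps to t - 1(t >= u).  Lebesgue measure is the measure space lebesgue.\<close>
definition sawpath :: "real \<Rightarrow> real \<Rightarrow> real" where
  "sawpath u t = t - (if t \<ge> u then 1 else 0)"

text \<open>E[X(t) | U in A] for U uniform on [0,1] (elementary conditioning on an event).\<close>
definition condmean :: "real set \<Rightarrow> real \<Rightarrow> real" where
  "condmean A t = (LINT u:A|lebesgue. sawpath u t) / measure lebesgue A"

definition cond_mse :: "real set \<Rightarrow> real" where
  "cond_mse A = (LINT u:A|lebesgue.
      (LINT t:{0..1}|lebesgue. (sawpath u t - condmean A t)\<^sup>2)) / measure lebesgue A"

definition cell :: "((real \<Rightarrow> real) \<Rightarrow> nat) \<Rightarrow> nat \<Rightarrow> real set" where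
  "cell f i = {u\<in>{0..1}. f (sawpath u) = i}"

text \<open>Distortion D(f) = E[ int_0^1 (X(t) - E[X(t) | f(X)])^2 dt ], where, f(X) being
  discrete, E[X(t) | f(X)] equals E[X(t) | f(X) = i] on the event f(X) = i.\<close>
definition distortion :: "((real \<Rightarrow> real) \<Rightarrow> nat) \<Rightarrow> real" where
  "distortion f = (LINT u:{0..1}|lebesgue.
      (LINT t:{0..1}|lebesgue. (sawpath u t - condmean (cell f (f (sawpath u))) t)\<^sup>2))"

end

theory Submission
  imports Defs
begin

text \<open>
  Let \<open>F\<^sub>A(t) = P(U \<le> t | U \<in> A)\<close>. Since \<open>X(t) = t - 1(U \<le> t)\<close>, the conditional mean of
  \<open>X(t)\<close> is \<open>t - F\<^sub>A(t)\<close> and its conditional variance is that of a Bernoulli variable,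
  \<open>F\<^sub>A(t) (1 - F\<^sub>A(t))\<close>; by Fubini the conditional error is \<open>\<integral>\<^sub>0\<^sup>1 F\<^sub>A (1 - F\<^sub>A)\<close>.
  On \<open>A\<close> itself \<open>F\<^sub>A\<close> pushes the uniform law on \<open>A\<close> forward to the uniform law on \<open>[0,1]\<close>
  (concretely \<open>\<integral>\<^sub>A \<mu>(A)F\<^sub>A = \<mu>(A)\<^sup>2/2\<close> and \<open>\<integral>\<^sub>A (\<mu>(A)F\<^sub>A)\<^sup>2 = \<mu>(A)\<^sup>3/3\<close>, both by Fubini), so
  \<open>\<integral>\<^sub>A F\<^sub>A (1 - F\<^sub>A) = \<mu>(A) \<integral>\<^sub>0\<^sup>1 s (1 - s) ds = \<mu>(A)/6\<close>. Off \<open>A\<close> the integrand is nonnegative,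
  and it vanishes when \<open>A\<close> is an interval, because then \<open>F\<^sub>A\<close> is 0 or 1 outside \<open>A\<close>.
  The distortion of an encoder is the sum over its cells \<open>A\<^sub>i\<close> of \<open>\<mu>(A\<^sub>i)\<close> times the
  conditional error of \<open>A\<^sub>i\<close>.
\<close>

lemma set_integrable_bounded_Icc:
  fixes g :: "real \<Rightarrow> real"
  assumes "S \<in> sets borel" "S \<subseteq> {a..b}" "g \<in> borel_measurable borel"
    and "\<And>x. x \<in> S \<Longrightarrow> \<bar>g x\<bar> \<le> C"
  shows "set_integrable lborel S g"
  unfolding set_integrable_def
proof (rule integrableI_bounded_set_indicator)
  have "emeasure lborel S \<le> emeasure lborel {a..b}"
    using assms by (intro emeasure_mono) auto
  also have "\<dots> < \<infinity>"
    by (simp add: emeasure_lborel_Icc_eq)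
  finally show "emeasure lborel S < \<infinity>" .
qed (use assms in auto)

lemma set_integral_swap_bounded:
  fixes \<phi> :: "real \<Rightarrow> real \<Rightarrow> real"
  assumes A: "A \<in> sets borel" "A \<subseteq> {a..b}" and B: "B \<in> sets borel" "B \<subseteq> {c..d}"
    and [measurable]: "(\<lambda>p. \<phi> (fst p) (snd p)) \<in> borel_measurable (lborel \<Otimes>\<^sub>M lborel)"
    and bnd: "\<And>u t. \<bar>\<phi> u t\<bar> \<le> C"
  shows "(LINT t:A|lborel. (LINT u:B|lborel. \<phi> u t)) = (LINT u:B|lborel. (LINT t:A|lborel. \<phi> u t))"
proof -
  have "0 \<le> C" using bnd[of 0 0] by linarith
  define f where "f u t = indicator B u * indicator A t * \<phi> u t" for u t :: real
  have "integrable (lborel \<Otimes>\<^sub>M lborel) (case_prod f)"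
  proof (rule integrableI_bounded_set[where A="{c..d} \<times> {a..b}" and B=C])
    show "case_prod f \<in> borel_measurable (lborel \<Otimes>\<^sub>M lborel)"
      unfolding f_def case_prod_beta' using A B by measurable
    show "emeasure (lborel \<Otimes>\<^sub>M lborel) ({c..d} \<times> {a..b}) < \<infinity>"
      by (subst lborel.emeasure_pair_measure_Times)
        (auto simp: emeasure_lborel_Icc_eq ennreal_mult_less_top)
    show "AE x in lborel \<Otimes>\<^sub>M lborel. x \<in> {c..d} \<times> {a..b} \<longrightarrow> norm (case_prod f x) \<le> C"
      using bnd \<open>0 \<le> C\<close> by (intro AE_I2) (auto simp: f_def indicator_def)
    show "AE x in lborel \<Otimes>\<^sub>M lborel. x \<notin> {c..d} \<times> {a..b} \<longrightarrow> case_prod f x = 0"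
      using A B by (intro AE_I2) (auto simp: f_def indicator_def)
  qed simp
  then have "(\<integral>t. (\<integral>u. f u t \<partial>lborel) \<partial>lborel) = (\<integral>u. (\<integral>t. f u t \<partial>lborel) \<partial>lborel)"
    by (rule lborel_pair.Fubini_integral)
  moreover have "(LINT t:A|lborel. (LINT u:B|lborel. \<phi> u t)) = (\<integral>t. (\<integral>u. f u t \<partial>lborel) \<partial>lborel)"
    "(LINT u:B|lborel. (LINT t:A|lborel. \<phi> u t)) = (\<integral>u. (\<integral>t. f u t \<partial>lborel) \<partial>lborel)"
    unfolding set_lebesgue_integral_def f_def
    by (intro Bochner_Integration.integral_cong refl;
        simp flip: integral_mult_right_zero add: ac_simps)+
  ultimately show ?thesis by simp
qed

lemma set_integral_lebesgue_eq_lborel: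
  fixes f :: "real \<Rightarrow> real"
  assumes "f \<in> borel_measurable borel" "S \<in> sets borel"
  shows "(LINT x:S|lebesgue. f x) = (LINT x:S|lborel. f x)"
  unfolding set_lebesgue_integral_def by (rule integral_completion) (use assms in measurable)

lemma set_integrable_lebesgue_bounded_Icc:
  fixes g :: "real \<Rightarrow> real"
  assumes "S \<in> sets borel" "S \<subseteq> {a..b}" "g \<in> borel_measurable borel"
    and "\<And>x. x \<in> S \<Longrightarrow> \<bar>g x\<bar> \<le> C"
  shows "set_integrable lebesgue S g"
proof -
  have "(\<lambda>x. indicat_real S x *\<^sub>R g x) \<in> borel_measurable lborel"
    using assms(1,3) by measurable
  then show ?thesis
    using set_integrable_bounded_Icc[OF assms] integrable_completion
    unfolding set_integrable_def by blast
qed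

lemma fmeasurable_subset_unit:
  "S \<in> sets borel \<Longrightarrow> S \<subseteq> {0..1::real} \<Longrightarrow> S \<in> fmeasurable lborel"
  by (rule fmeasurableI2[of "{0..1}"]) (auto simp: fmeasurable_def)

lemma measure_subset_unit_le_1:
  "S \<in> sets borel \<Longrightarrow> S \<subseteq> {0..1::real} \<Longrightarrow> measure lborel S \<le> 1"
  using measure_mono_fmeasurable[of S "{0..1::real}" lborel] by (auto simp: fmeasurable_def)

lemma set_integral_const_subset_unit:
  "S \<in> sets borel \<Longrightarrow> S \<subseteq> {0..1::real} \<Longrightarrow> (LINT u:S|lborel. (c::real)) = measure lborel S * c"
  using set_integral_const[of S lborel c] fmeasurable_subset_unit[of S]
  by (auto simp: fmeasurable_def)

section \<open>The mass function of a subset of the unit interval\<close>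

definition mass_upto :: "real set \<Rightarrow> real \<Rightarrow> real" where
  "mass_upto A t = measure lborel (A \<inter> {..t})"

lemma mass_upto_bounds:
  assumes "A \<in> sets borel" "A \<subseteq> {0..1}"
  shows "0 \<le> mass_upto A t" "mass_upto A t \<le> measure lborel A" "mass_upto A t \<le> 1"
proof -
  show "0 \<le> mass_upto A t" by (simp add: mass_upto_def)
  show le: "mass_upto A t \<le> measure lborel A"
    using assms by (auto simp: mass_upto_def intro!: measure_mono_fmeasurable fmeasurable_subset_unit)
  show "mass_upto A t \<le> 1"
    using le measure_subset_unit_le_1[OF assms] by linarith
qed

lemma borel_measurable_mass_upto:
  assumes "A \<in> sets borel" "A \<subseteq> {0..1}"
  shows "mass_upto A \<in> borel_measurable borel"
proof (rule borel_measurable_mono)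
  show "mono (mass_upto A)"
    using assms by (auto simp: mono_def mass_upto_def intro!: measure_mono_fmeasurable fmeasurable_subset_unit)
qed

lemma measure_below_eq_mass_upto:
  assumes "A \<in> sets borel"
  shows "measure lborel (A \<inter> {..<t}) = mass_upto A t"
proof -
  have "A \<inter> {t} \<in> null_sets lborel"
    by (rule countable_imp_null_set_lborel) simp
  then have "measure lborel ((A \<inter> {..<t}) \<union> (A \<inter> {t})) = measure lborel (A \<inter> {..<t})"
    using assms by (intro measure_Un_null_set) auto
  moreover have "(A \<inter> {..<t}) \<union> (A \<inter> {t}) = A \<inter> {..t}" by auto
  ultimately show ?thesis
    unfolding mass_upto_def by (simp only:)
qed

lemma measure_from_eq_mass_upto:
  assumes "A \<in> sets borel" "A \<subseteq> {0..1}"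
  shows "measure lborel (A \<inter> {t..}) = measure lborel A - mass_upto A t"
proof -
  have "measure lborel (A - (A \<inter> {..<t})) = measure lborel A - measure lborel (A \<inter> {..<t})"
    using fmeasurable_subset_unit[OF assms] by (intro measure_Diff) (auto simp: fmeasurable_def)
  moreover have "A - (A \<inter> {..<t}) = A \<inter> {t..}" by auto
  ultimately show ?thesis
    by (simp only: measure_below_eq_mass_upto[OF assms(1)])
qed

lemma set_integral_step_upto:
  assumes "A \<in> sets borel" "A \<subseteq> {0..1}"
  shows "(LINT u:A|lborel. (if u \<le> t then 1 else 0::real)) = mass_upto A t"
proof -
  have "(LINT u:A|lborel. (if u \<le> t then 1 else 0::real)) = (LINT u:A \<inter> {..t}|lborel. 1::real)"
    unfolding set_lebesgue_integral_def
    by (intro Bochner_Integration.integral_cong) (auto simp: indicator_def)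
  then show ?thesis
    using assms set_integral_const_subset_unit[of "A \<inter> {..t}" 1] by (auto simp: mass_upto_def)
qed

lemma set_integral_step_from:
  assumes "A \<in> sets borel" "A \<subseteq> {0..1}"
  shows "(LINT t:A|lborel. (if u \<le> t then 1 else 0::real)) = measure lborel A - mass_upto A u"
proof -
  have "(LINT t:A|lborel. (if u \<le> t then 1 else 0::real)) = (LINT t:A \<inter> {u..}|lborel. 1::real)"
    unfolding set_lebesgue_integral_def
    by (intro Bochner_Integration.integral_cong) (auto simp: indicator_def)
  then show ?thesis
    using assms set_integral_const_subset_unit[of "A \<inter> {u..}" 1] measure_from_eq_mass_upto[OF assms]
    by auto
qed

lemma set_integral_mass_upto:
  assumes A: "A \<in> sets borel" "A \<subseteq> {0..1}"
  shows "(LINT t:A|lborel. mass_upto A t) = (measure lborel A)\<^sup>2 / 2"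
proof -
  let ?\<mu> = "measure lborel A"
  note [measurable] = borel_measurable_mass_upto[OF A]
  have int_mass: "set_integrable lborel A (mass_upto A)"
    by (rule set_integrable_bounded_Icc[OF A, where C=1]) (use mass_upto_bounds[OF A] in auto)
  have int_const: "set_integrable lborel A (\<lambda>_. ?\<mu>)"
    by (rule set_integrable_bounded_Icc[OF A, where C=1]) (use measure_subset_unit_le_1[OF A] in auto)
  have "(LINT t:A|lborel. mass_upto A t) = (LINT t:A|lborel. (LINT u:A|lborel. (if u \<le> t then 1 else 0::real)))"
    by (simp add: set_integral_step_upto[OF A])
  also have "\<dots> = (LINT u:A|lborel. (LINT t:A|lborel. (if u \<le> t then 1 else 0::real)))"
  proof (rule set_integral_swap_bounded[OF A A, where C=1])
    show "(\<lambda>p::real \<times> real. if fst p \<le> snd p then 1 else 0::real) \<in> borel_measurable (lborel \<Otimes>\<^sub>M lborel)"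
      by measurable
  qed simp
  also have "\<dots> = (LINT u:A|lborel. ?\<mu> - mass_upto A u)"
    by (simp add: set_integral_step_from[OF A])
  also have "\<dots> = ?\<mu> * ?\<mu> - (LINT u:A|lborel. mass_upto A u)"
    by (simp add: set_integral_diff(2)[OF int_const int_mass] set_integral_const_subset_unit[OF A])
  finally show ?thesis by (simp add: power2_eq_square)
qed

lemma mass_upto_Int_lessThan:
  "t < u \<Longrightarrow> mass_upto (A \<inter> {..<u}) t = mass_upto A t"
  unfolding mass_upto_def by (intro arg_cong[where f="measure lborel"]) auto

lemma set_integral_mass_upto_sq:
  assumes A: "A \<in> sets borel" "A \<subseteq> {0..1}"
  shows "(LINT t:A|lborel. (mass_upto A t)\<^sup>2) = (measure lborel A)^3 / 3"
proof -
  let ?\<mu> = "measure lborel A"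
  note bnd = mass_upto_bounds[OF A]
  note [measurable] = borel_measurable_mass_upto[OF A]
  have int_mass: "set_integrable lborel A (mass_upto A)"
    by (rule set_integrable_bounded_Icc[OF A, where C=1]) (use bnd in auto)
  have int_sq: "set_integrable lborel A (\<lambda>t. (mass_upto A t)\<^sup>2)"
    by (rule set_integrable_bounded_Icc[OF A, where C=1]) (use bnd in \<open>auto simp: power_le_one\<close>)
  have int_const: "set_integrable lborel A (\<lambda>_. c)" for c :: real
    by (rule set_integrable_bounded_Icc[OF A, where C="\<bar>c\<bar>"]) auto
  have inner: "(LINT t:A|lborel. (if u \<le> t then 1 else 0) * mass_upto A t) = ?\<mu>\<^sup>2/2 - (mass_upto A u)\<^sup>2/2"
    for u
  proof -
    let ?B = "A \<inter> {..<u}"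
    have B: "?B \<in> sets borel" "?B \<subseteq> {0..1}" using A by auto
    have int_below: "set_integrable lborel A (\<lambda>t. (if t < u then 1 else 0) * mass_upto A t)"
      by (rule set_integrable_bounded_Icc[OF A, where C=1]) (use bnd in auto)
    have "(LINT t:A|lborel. (if u \<le> t then 1 else 0) * mass_upto A t)
        = (LINT t:A|lborel. mass_upto A t - (if t < u then 1 else 0) * mass_upto A t)"
      by (intro set_lebesgue_integral_cong) (use A in auto)
    also have "\<dots> = (LINT t:A|lborel. mass_upto A t) - (LINT t:A|lborel. (if t < u then 1 else 0) * mass_upto A t)"
      by (rule set_integral_diff(2)[OF int_mass int_below])
    also have "(LINT t:A|lborel. (if t < u then 1 else 0) * mass_upto A t) = (LINT t:?B|lborel. mass_upto ?B t)"
      unfolding set_lebesgue_integral_def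
      by (intro Bochner_Integration.integral_cong) (auto simp: indicator_def mass_upto_Int_lessThan)
    finally show ?thesis
      using set_integral_mass_upto[OF A] set_integral_mass_upto[OF B] measure_below_eq_mass_upto[OF A(1)]
      by simp
  qed
  have "(LINT t:A|lborel. (mass_upto A t)\<^sup>2)
      = (LINT t:A|lborel. (LINT u:A|lborel. (if u \<le> t then 1 else 0) * mass_upto A t))"
    by (simp add: set_integral_step_upto[OF A] power2_eq_square)
  also have "\<dots> = (LINT u:A|lborel. (LINT t:A|lborel. (if u \<le> t then 1 else 0) * mass_upto A t))"
  proof (rule set_integral_swap_bounded[OF A A, where C=1])
    show "(\<lambda>p. (if fst p \<le> snd p then 1 else 0) * mass_upto A (snd p)) \<in> borel_measurable (lborel \<Otimes>\<^sub>M lborel)"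
      by measurable
  qed (use bnd in auto)
  also have "\<dots> = (LINT u:A|lborel. ?\<mu>\<^sup>2/2 - (mass_upto A u)\<^sup>2/2)"
    by (simp add: inner)
  also have "\<dots> = ?\<mu> * (?\<mu>\<^sup>2/2) - (LINT u:A|lborel. (mass_upto A u)\<^sup>2) / 2"
    using set_integral_diff(2)[OF int_const set_integrable_divide[OF int_sq, of 2]]
    by (simp add: set_integral_const_subset_unit[OF A] set_integral_divide_zero)
  finally show ?thesis by (simp add: power3_eq_cube power2_eq_square field_simps)
qed

definition cond_cdf :: "real set \<Rightarrow> real \<Rightarrow> real" where
  "cond_cdf A t = mass_upto A t / measure lborel A"

lemma cond_cdf_bounds:
  assumes "A \<in> sets borel" "A \<subseteq> {0..1}"
  shows "0 \<le> cond_cdf A t" "cond_cdf A t \<le> 1"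
  using mass_upto_bounds[OF assms, of t] unfolding cond_cdf_def
  by (auto simp: divide_le_eq_1 less_le)

lemma borel_measurable_cond_cdf:
  assumes "A \<in> sets borel" "A \<subseteq> {0..1}"
  shows "cond_cdf A \<in> borel_measurable borel"
  unfolding cond_cdf_def using borel_measurable_mass_upto[OF assms] by measurable

lemma set_integral_cond_cdf_variance:
  assumes A: "A \<in> sets borel" "A \<subseteq> {0..1}" and pos: "measure lborel A > 0"
  shows "(LINT t:A|lborel. cond_cdf A t * (1 - cond_cdf A t)) = measure lborel A / 6"
proof -
  let ?\<mu> = "measure lborel A"
  note bnd = mass_upto_bounds[OF A]
  note [measurable] = borel_measurable_mass_upto[OF A]
  have int_mass: "set_integrable lborel A (\<lambda>t. ?\<mu> * mass_upto A t)"
    by (rule set_integrable_bounded_Icc[OF A, where C=1])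
      (use bnd measure_subset_unit_le_1[OF A] in \<open>auto simp: abs_le_iff mult_le_one\<close>)
  have int_sq: "set_integrable lborel A (\<lambda>t. (mass_upto A t)\<^sup>2)"
    by (rule set_integrable_bounded_Icc[OF A, where C=1])
      (use bnd in \<open>auto simp: abs_le_iff power_le_one\<close>)
  have "(LINT t:A|lborel. cond_cdf A t * (1 - cond_cdf A t))
      = (LINT t:A|lborel. (?\<mu> * mass_upto A t - (mass_upto A t)\<^sup>2) / ?\<mu>\<^sup>2)"
    using pos A by (intro set_lebesgue_integral_cong) (auto simp: cond_cdf_def field_simps power2_eq_square)
  also have "\<dots> = ((LINT t:A|lborel. ?\<mu> * mass_upto A t) - (LINT t:A|lborel. (mass_upto A t)\<^sup>2)) / ?\<mu>\<^sup>2"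
    using set_integral_diff(2)[OF int_mass int_sq] by simp
  also have "\<dots> = (?\<mu> * (?\<mu>\<^sup>2 / 2) - ?\<mu> ^ 3 / 3) / ?\<mu>\<^sup>2"
    by (simp only: set_integral_mult_right set_integral_mass_upto[OF A] set_integral_mass_upto_sq[OF A])
  also have "\<dots> = ?\<mu> / 6"
    using pos by (simp add: field_simps power2_eq_square power3_eq_cube)
  finally show ?thesis .
qed

lemma cond_cdf_variance_outside_interval:
  assumes iv: "is_interval A" and t: "t \<notin> A" and pos: "measure lborel A > 0"
  shows "cond_cdf A t * (1 - cond_cdf A t) = 0"
proof (cases "\<exists>a\<in>A. a \<le> t")
  case True
  then obtain a where a: "a \<in> A" "a \<le> t" by blast
  have "A \<inter> {..t} = A"
  proof safe
    fix b assume "b \<in> A"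
    show "b \<le> t"
      using mem_is_interval_1_I[OF iv a(1) \<open>b \<in> A\<close> a(2)] t by (metis linorder_le_cases)
  qed
  then show ?thesis using pos by (simp add: cond_cdf_def mass_upto_def)
next
  case False
  then have "A \<inter> {..t} = {}" by auto
  then show ?thesis by (simp add: cond_cdf_def mass_upto_def)
qed

lemma integral_cond_cdf_variance_eq:
  assumes A: "A \<in> sets borel" "A \<subseteq> {0..1}" and pos: "measure lborel A > 0"
  shows "(LINT t:{0..1}|lborel. cond_cdf A t * (1 - cond_cdf A t))
    = measure lborel A / 6 + (LINT t:{0..1} - A|lborel. cond_cdf A t * (1 - cond_cdf A t))"
proof -
  let ?h = "\<lambda>t. cond_cdf A t * (1 - cond_cdf A t)"
  note [measurable] = borel_measurable_cond_cdf[OF A]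
  have h_bnd: "\<bar>?h t\<bar> \<le> 1" for t
    using cond_cdf_bounds[OF A, of t] by (simp add: abs_le_iff mult_le_one)
  have "(LINT t:A \<union> ({0..1} - A)|lborel. ?h t) = (LINT t:A|lborel. ?h t) + (LINT t:{0..1} - A|lborel. ?h t)"
    by (rule set_integral_Un) (use A h_bnd in \<open>auto intro!: set_integrable_bounded_Icc[where C=1]\<close>)
  moreover have "A \<union> ({0..1} - A) = {0..1}" using A(2) by blast
  ultimately show ?thesis
    using set_integral_cond_cdf_variance[OF A pos] by simp
qed

lemma integral_cond_cdf_variance_ge:
  assumes A: "A \<in> sets borel" "A \<subseteq> {0..1}" and pos: "measure lborel A > 0"
  shows "measure lborel A / 6 \<le> (LINT t:{0..1}|lborel. cond_cdf A t * (1 - cond_cdf A t))"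
proof -
  have "0 \<le> (LINT t:{0..1} - A|lborel. cond_cdf A t * (1 - cond_cdf A t))"
    unfolding set_lebesgue_integral_def using cond_cdf_bounds[OF A]
    by (intro Bochner_Integration.integral_nonneg) (simp add: indicator_def)
  then show ?thesis
    using integral_cond_cdf_variance_eq[OF A pos] by linarith
qed

lemma integral_cond_cdf_variance_interval:
  assumes A: "A \<in> sets borel" "A \<subseteq> {0..1}" and pos: "measure lborel A > 0"
    and iv: "is_interval A"
  shows "(LINT t:{0..1}|lborel. cond_cdf A t * (1 - cond_cdf A t)) = measure lborel A / 6"
proof -
  have "(LINT t:{0..1} - A|lborel. cond_cdf A t * (1 - cond_cdf A t)) = (LINT t:{0..1} - A|lborel. 0)"
    using A cond_cdf_variance_outside_interval[OF iv _ pos] by (intro set_lebesgue_integral_cong) auto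
  then show ?thesis
    using integral_cond_cdf_variance_eq[OF A pos] by simp
qed

section \<open>Conditional means of the sawbridge\<close>

lemma sawpath_eq_step: "sawpath u t = t - (if u \<le> t then 1 else 0)"
  by (simp add: sawpath_def)

lemma condmean_eq_cond_cdf:
  assumes A: "A \<in> sets borel" "A \<subseteq> {0..1}" and pos: "measure lborel A > 0"
  shows "condmean A t = t - cond_cdf A t"
proof -
  have "(LINT u:A|lebesgue. sawpath u t) = (LINT u:A|lborel. t - (if u \<le> t then 1 else 0))"
    unfolding sawpath_eq_step by (rule set_integral_lebesgue_eq_lborel) (use A in auto)
  also have "\<dots> = (LINT u:A|lborel. t) - (LINT u:A|lborel. (if u \<le> t then 1 else 0))"
    by (rule set_integral_diff(2); rule set_integrable_bounded_Icc[OF A, where C="\<bar>t\<bar> + 1"]) auto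
  also have "\<dots> = measure lborel A * t - mass_upto A t"
    by (simp add: set_integral_const_subset_unit[OF A] set_integral_step_upto[OF A])
  finally show ?thesis
    unfolding condmean_def cond_cdf_def using A pos by (simp add: field_simps)
qed

text \<open>On a null set the conditional mean is 0, by the convention \<open>x / 0 = 0\<close>.\<close>
lemma condmean_null: "measure lebesgue A = 0 \<Longrightarrow> condmean A t = 0"
  by (simp add: condmean_def)

lemma borel_measurable_condmean:
  assumes A: "A \<in> sets borel" "A \<subseteq> {0..1}"
  shows "condmean A \<in> borel_measurable borel"
proof (cases "measure lborel A > 0")
  case True
  note [measurable] = borel_measurable_cond_cdf[OF A]
  show ?thesis by (subst condmean_eq_cond_cdf[OF A True, abs_def]) measurable
next
  case False
  then have "condmean A = (\<lambda>t. 0)"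
    using A measure_nonneg[of lborel A] by (intro ext condmean_null) simp
  then show ?thesis by simp
qed

lemma abs_sawpath_minus_condmean_le_1:
  assumes A: "A \<in> sets borel" "A \<subseteq> {0..1}" and t: "t \<in> {0..1}"
  shows "\<bar>sawpath u t - condmean A t\<bar> \<le> 1"
proof (cases "measure lborel A > 0")
  case True
  then show ?thesis
    using cond_cdf_bounds[OF A, of t] by (auto simp: condmean_eq_cond_cdf[OF A True] sawpath_eq_step)
next
  case False
  then have "condmean A t = 0"
    using A measure_nonneg[of lborel A] by (intro condmean_null) simp
  then show ?thesis using t by (auto simp: sawpath_eq_step)
qed

text \<open>\<open>cond_mse A\<close> and \<open>distortion f\<close> are averages of this error of reconstructing the
  path with \<open>U = u\<close> by the conditional mean of a set containing \<open>u\<close>.\<close>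
definition recon_error :: "real set \<Rightarrow> real \<Rightarrow> real" where
  "recon_error A u = (LINT t:{0..1}|lebesgue. (sawpath u t - condmean A t)\<^sup>2)"

lemma recon_error_lborel:
  assumes A: "A \<in> sets borel" "A \<subseteq> {0..1}"
  shows "recon_error A u = (LINT t:{0..1}|lborel. (sawpath u t - condmean A t)\<^sup>2)"
  unfolding recon_error_def
  by (rule set_integral_lebesgue_eq_lborel)
    (use borel_measurable_condmean[OF A] in \<open>auto simp: sawpath_eq_step\<close>)

lemma borel_measurable_recon_error:
  assumes A: "A \<in> sets borel" "A \<subseteq> {0..1}"
  shows "recon_error A \<in> borel_measurable borel"
proof -
  note [measurable] = borel_measurable_condmean[OF A]
  have "(\<lambda>u. LINT t:{0..1}|lborel. (sawpath u t - condmean A t)\<^sup>2) \<in> borel_measurable lborel"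
    unfolding set_lebesgue_integral_def sawpath_eq_step by measurable
  then show ?thesis
    by (simp add: recon_error_lborel[OF A, abs_def])
qed

lemma recon_error_bounds:
  assumes A: "A \<in> sets borel" "A \<subseteq> {0..1}"
  shows "0 \<le> recon_error A u" "recon_error A u \<le> 1"
proof -
  note [measurable] = borel_measurable_condmean[OF A]
  have sq_bnd: "0 \<le> (sawpath u t - condmean A t)\<^sup>2 \<and> (sawpath u t - condmean A t)\<^sup>2 \<le> 1"
    if "t \<in> {0..1}" for t
    using abs_sawpath_minus_condmean_le_1[OF A that, of u] by (simp add: abs_square_le_1)
  show "0 \<le> recon_error A u"
    unfolding recon_error_lborel[OF A] set_lebesgue_integral_def using sq_bnd
    by (intro Bochner_Integration.integral_nonneg) (auto simp: indicator_def)
  have "set_integrable lborel {0..1} (\<lambda>t. (sawpath u t - condmean A t)\<^sup>2)"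
    by (rule set_integrable_bounded_Icc[where C=1]) (use sq_bnd in \<open>auto simp: sawpath_eq_step\<close>)
  moreover have "set_integrable lborel {0..1::real} (\<lambda>_. 1::real)"
    by (rule set_integrable_bounded_Icc[where C=1]) auto
  ultimately have "recon_error A u \<le> (LINT t:{0..1::real}|lborel. 1)"
    unfolding recon_error_lborel[OF A] by (rule set_integral_mono) (use sq_bnd in auto)
  then show "recon_error A u \<le> 1"
    using set_integral_const_subset_unit[of "{0..1}" 1] by simp
qed

lemma recon_error_eq_cond_cdf:
  assumes A: "A \<in> sets borel" "A \<subseteq> {0..1}" and pos: "measure lborel A > 0"
  shows "recon_error A u = (LINT t:{0..1}|lborel. (cond_cdf A t - (if u \<le> t then 1 else 0))\<^sup>2)"
  unfolding recon_error_lborel[OF A]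
  by (simp add: condmean_eq_cond_cdf[OF A pos] sawpath_eq_step power2_commute)

lemma set_integral_recon_error:
  assumes A: "A \<in> sets borel" "A \<subseteq> {0..1}" and pos: "measure lborel A > 0"
  shows "(LINT u:A|lebesgue. recon_error A u)
    = measure lborel A * (LINT t:{0..1}|lborel. cond_cdf A t * (1 - cond_cdf A t))"
proof -
  let ?\<mu> = "measure lborel A" and ?F = "cond_cdf A"
  let ?step = "\<lambda>u t. if u \<le> t then 1 else 0::real"
  note [measurable] = borel_measurable_cond_cdf[OF A]
  note F_bnd = cond_cdf_bounds[OF A]
  have sq_bnd: "\<bar>(?F t - ?step u t)\<^sup>2\<bar> \<le> 1" for u t
    using F_bnd[of t] by (auto simp: abs_square_le_1 abs_le_iff)
  have inner: "(LINT u:A|lborel. (?F t - ?step u t)\<^sup>2) = ?\<mu> * (?F t * (1 - ?F t))" for t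
  proof -
    have "(LINT u:A|lborel. (?F t - ?step u t)\<^sup>2) = (LINT u:A|lborel. (?F t)\<^sup>2 + (1 - 2 * ?F t) * ?step u t)"
      using A by (intro set_lebesgue_integral_cong) (auto simp: power2_eq_square algebra_simps)
    also have "\<dots> = ?\<mu> * (?F t)\<^sup>2 + (1 - 2 * ?F t) * mass_upto A t"
      by (subst set_integral_add(2); (rule set_integrable_bounded_Icc[OF A, where C="(?F t)\<^sup>2 + \<bar>1 - 2 * ?F t\<bar>"])?)
        (auto simp: set_integral_const_subset_unit[OF A] set_integral_step_upto[OF A])
    also have "\<dots> = ?\<mu> * (?F t * (1 - ?F t))"
      using pos by (simp add: cond_cdf_def field_simps power2_eq_square)
    finally show ?thesis .
  qed
  have "(LINT u:A|lebesgue. recon_error A u) = (LINT u:A|lborel. recon_error A u)"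
    by (rule set_integral_lebesgue_eq_lborel[OF borel_measurable_recon_error[OF A] A(1)])
  also have "\<dots> = (LINT u:A|lborel. (LINT t:{0..1}|lborel. (?F t - ?step u t)\<^sup>2))"
    by (simp add: recon_error_eq_cond_cdf[OF A pos])
  also have "\<dots> = (LINT t:{0..1}|lborel. (LINT u:A|lborel. (?F t - ?step u t)\<^sup>2))"
  proof (rule set_integral_swap_bounded[OF _ _ A, symmetric, where C=1])
    show "(\<lambda>p::real \<times> real. (?F (snd p) - ?step (fst p) (snd p))\<^sup>2) \<in> borel_measurable (lborel \<Otimes>\<^sub>M lborel)"
      by measurable
  qed (use sq_bnd in auto)
  also have "\<dots> = ?\<mu> * (LINT t:{0..1}|lborel. ?F t * (1 - ?F t))"
    by (simp add: inner)
  finally show ?thesis .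
qed

lemma cond_mse_eq_integral_cond_cdf_variance:
  assumes A: "A \<in> sets borel" "A \<subseteq> {0..1}" and pos: "measure lborel A > 0"
  shows "cond_mse A = (LINT t:{0..1}|lborel. cond_cdf A t * (1 - cond_cdf A t))"
  using set_integral_recon_error[OF assms] A pos
  by (simp add: cond_mse_def recon_error_def[symmetric])

lemma lebesgue_set_AE_borel:
  assumes "A \<in> sets lebesgue"
  obtains S where "S \<in> sets borel" "S \<subseteq> A" "AE x in lebesgue. x \<in> S \<longleftrightarrow> x \<in> A"
proof -
  obtain S N N' where SN: "A = S \<union> N" "N \<subseteq> N'" "N' \<in> null_sets lborel" "S \<in> sets lborel"
    using sets_completionE[OF assms] by metis
  have "N' \<in> null_sets lebesgue"
    using SN(3) by (simp add: null_sets_completion_iff2) blast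
  then have "AE x in lebesgue. x \<in> S \<longleftrightarrow> x \<in> A"
    by (rule AE_I') (use SN in auto)
  with SN that show ?thesis by auto
qed

lemma set_integral_lebesgue_AE_cong:
  fixes g :: "real \<Rightarrow> real"
  assumes "A \<in> sets lebesgue" "S \<in> sets lebesgue" "AE x in lebesgue. x \<in> S \<longleftrightarrow> x \<in> A"
    and "g \<in> borel_measurable borel"
  shows "(LINT u:A|lebesgue. g u) = (LINT u:S|lebesgue. g u)"
proof (rule set_integral_cong_set)
  have "g \<in> borel_measurable lebesgue"
    using assms(4) by (intro measurable_completion) simp
  then show "set_borel_measurable lebesgue A g" "set_borel_measurable lebesgue S g"
    unfolding set_borel_measurable_def using assms(1,2)
    by (intro borel_measurable_scaleR borel_measurable_indicator; simp)+
qed (use assms(3) in auto)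

lemma cond_mse_AE_cong:
  assumes A: "A \<in> sets lebesgue" and S: "S \<in> sets borel" "S \<subseteq> {0..1}"
    and ae: "AE x in lebesgue. x \<in> S \<longleftrightarrow> x \<in> A"
  shows "cond_mse A = cond_mse S"
proof -
  note cong = set_integral_lebesgue_AE_cong[OF A _ ae]
  have meas: "measure lebesgue S = measure lebesgue A"
    using measure_eq_AE[OF ae] A S by simp
  have "condmean A = condmean S"
  proof
    fix t
    have "(\<lambda>u. sawpath u t) \<in> borel_measurable borel"
      unfolding sawpath_def by measurable
    then show "condmean A t = condmean S t"
      unfolding condmean_def using cong meas S by simp
  qed
  then have "recon_error A = recon_error S"
    by (simp add: recon_error_def[abs_def])
  then show ?thesis
    unfolding cond_mse_def recon_error_def[symmetric]
    using cong[OF _ borel_measurable_recon_error[OF S]] meas S by simp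
qed

lemma cond_mse_ge:
  assumes A: "A \<in> sets lebesgue" "A \<subseteq> {0..1}" and pos: "measure lebesgue A > 0"
  shows "measure lebesgue A / 6 \<le> cond_mse A"
proof -
  obtain S where S: "S \<in> sets borel" "S \<subseteq> A" and ae: "AE x in lebesgue. x \<in> S \<longleftrightarrow> x \<in> A"
    using lebesgue_set_AE_borel[OF A(1)] by blast
  have S01: "S \<subseteq> {0..1}" using S A by auto
  have "measure lborel S = measure lebesgue A"
    using measure_eq_AE[OF ae] A S by simp
  then show ?thesis
    using cond_mse_AE_cong[OF A(1) S(1) S01 ae] pos
      cond_mse_eq_integral_cond_cdf_variance[OF S(1) S01] integral_cond_cdf_variance_ge[OF S(1) S01]
    by simp
qed

lemma cond_mse_interval:
  assumes iv: "is_interval A" and A01: "A \<subseteq> {0..1}" and pos: "measure lebesgue A > 0"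
  shows "cond_mse A = measure lebesgue A / 6"
proof -
  have A: "A \<in> sets borel" using real_interval_borel_measurable[OF iv] .
  then have "measure lborel A > 0" using pos by simp
  then show ?thesis
    using cond_mse_eq_integral_cond_cdf_variance[OF A A01] integral_cond_cdf_variance_interval[OF A A01 _ iv] A
    by simp
qed

lemma set_integral_recon_error_bounds:
  assumes A: "A \<in> sets borel" "A \<subseteq> {0..1}"
  shows "0 \<le> (LINT u:A|lebesgue. recon_error A u)" "(LINT u:A|lebesgue. recon_error A u) \<le> measure lebesgue A"
proof -
  note bnd = recon_error_bounds[OF A]
  have eq: "(LINT u:A|lebesgue. recon_error A u) = (LINT u:A|lborel. recon_error A u)"
    by (rule set_integral_lebesgue_eq_lborel[OF borel_measurable_recon_error[OF A] A(1)])
  show "0 \<le> (LINT u:A|lebesgue. recon_error A u)"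
    unfolding eq set_lebesgue_integral_def using bnd
    by (intro Bochner_Integration.integral_nonneg) (simp add: indicator_def)
  have "(LINT u:A|lborel. recon_error A u) \<le> (LINT u:A|lborel. 1)"
  proof (rule set_integral_mono)
    show "set_integrable lborel A (recon_error A)"
      by (rule set_integrable_bounded_Icc[OF A borel_measurable_recon_error[OF A], where C=1])
        (use bnd in auto)
    show "set_integrable lborel A (\<lambda>_. 1::real)"
      by (rule set_integrable_bounded_Icc[OF A, where C=1]) auto
  qed (use bnd in auto)
  then show "(LINT u:A|lebesgue. recon_error A u) \<le> measure lebesgue A"
    unfolding eq using set_integral_const_subset_unit[OF A, of 1] A by simp
qed

lemma set_integral_recon_error_eq_cond_mse:
  "(LINT u:A|lebesgue. recon_error A u) = measure lebesgue A * cond_mse A"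
  if "measure lebesgue A > 0"
  using that by (simp add: cond_mse_def recon_error_def)

lemma set_integral_recon_error_ge:
  assumes A: "A \<in> sets borel" "A \<subseteq> {0..1}"
  shows "(measure lebesgue A)\<^sup>2 / 6 \<le> (LINT u:A|lebesgue. recon_error A u)"
proof (cases "measure lebesgue A > 0")
  case True
  then have "(measure lebesgue A)\<^sup>2 / 6 \<le> measure lebesgue A * cond_mse A"
    using cond_mse_ge[of A] A by (simp add: power2_eq_square)
  then show ?thesis using set_integral_recon_error_eq_cond_mse[OF True] by simp
next
  case False
  then show ?thesis
    using set_integral_recon_error_bounds[OF A] measure_nonneg[of lebesgue A] by simp
qed

lemma set_integral_recon_error_interval:
  assumes A: "A \<in> sets borel" "A \<subseteq> {0..1}" and iv: "A \<noteq> {} \<Longrightarrow> is_interval A"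
  shows "(LINT u:A|lebesgue. recon_error A u) = (measure lebesgue A)\<^sup>2 / 6"
proof (cases "measure lebesgue A > 0")
  case True
  then have "A \<noteq> {}" by auto
  then show ?thesis
    using set_integral_recon_error_eq_cond_mse[OF True] cond_mse_interval[OF iv A(2) True]
    by (simp add: power2_eq_square)
next
  case False
  then show ?thesis
    using set_integral_recon_error_bounds[OF A] measure_nonneg[of lebesgue A] by simp
qed

lemma cell_subset: "cell f i \<subseteq> {0..1}"
  by (auto simp: cell_def)

lemma sets_cell:
  assumes f: "(\<lambda>u. f (sawpath u)) \<in> measurable (restrict_space borel {0..1}) (count_space UNIV)"
  shows "cell f i \<in> sets borel"
proof -
  have "(\<lambda>u. f (sawpath u)) -` {i} \<inter> space (restrict_space borel {0..1}) \<in> sets (restrict_space borel {0..1})"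
    by (rule measurable_sets[OF f]) auto
  moreover have "(\<lambda>u. f (sawpath u)) -` {i} \<inter> space (restrict_space borel {0..1}) = cell f i"
    by (auto simp: cell_def)
  ultimately show ?thesis by (auto simp: sets_restrict_space_iff)
qed

lemma distortion_eq_suminf_cells:
  assumes f: "(\<lambda>u. f (sawpath u)) \<in> measurable (restrict_space borel {0..1}) (count_space UNIV)"
  shows "distortion f = (\<Sum>i. LINT u:cell f i|lebesgue. recon_error (cell f i) u)"
proof -
  note cells = sets_cell[OF f] cell_subset
  define g where "g u = (if u \<in> {0..1} then f (sawpath u) else 0)" for u
  have "g \<in> borel \<rightarrow>\<^sub>M count_space UNIV"
    using f measurable_restrict_space_iff[where \<Omega>="{0..1::real}" and M=borel and N="count_space UNIV"
        and c=0 and f="\<lambda>u. f (sawpath u)"]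
    unfolding g_def by simp
  then have "(\<lambda>u. recon_error (cell f (g u)) u) \<in> borel_measurable borel"
    by (rule measurable_compose_countable[rotated]) (use borel_measurable_recon_error cells in auto)
  moreover have "\<bar>recon_error (cell f (g u)) u\<bar> \<le> 1" for u
    using recon_error_bounds[OF cells] by simp
  moreover have union: "(\<Union>i. cell f i) = {0..1}"
    by (auto simp: cell_def)
  ultimately have int: "set_integrable lebesgue (\<Union>i. cell f i) (\<lambda>u. recon_error (cell f (g u)) u)"
    by (intro set_integrable_lebesgue_bounded_Icc[where C=1]) (auto simp: union)
  have "distortion f = (LINT u:(\<Union>i. cell f i)|lebesgue. recon_error (cell f (g u)) u)"
    unfolding distortion_def union
    by (intro set_lebesgue_integral_cong) (auto simp: g_def recon_error_def cell_def)
  also have "\<dots> = (\<Sum>i. LINT u:cell f i|lebesgue. recon_error (cell f (g u)) u)"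
    by (rule lebesgue_integral_countable_add[OF _ _ int]) (use cells in \<open>auto simp: cell_def\<close>)
  also have "\<dots> = (\<Sum>i. LINT u:cell f i|lebesgue. recon_error (cell f i) u)"
    by (intro suminf_cong set_lebesgue_integral_cong) (use cells in \<open>auto simp: g_def cell_def\<close>)
  finally show ?thesis .
qed

lemma summable_measure_cell:
  assumes f: "(\<lambda>u. f (sawpath u)) \<in> measurable (restrict_space borel {0..1}) (count_space UNIV)"
  shows "summable (\<lambda>i. measure lebesgue (cell f i))"
proof -
  have "(\<lambda>i. measure lebesgue (cell f i)) sums measure lebesgue (\<Union>i. cell f i)"
  proof (rule measure_UNION)
    show "range (cell f) \<subseteq> sets lebesgue"
      using sets_cell[OF f] by auto
    show "disjoint_family (cell f)"
      by (auto simp: disjoint_family_on_def cell_def)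
    have "(\<Union>i. cell f i) = {0..1}"
      by (auto simp: cell_def)
    then show "emeasure lebesgue (\<Union>i. cell f i) \<noteq> \<infinity>"
      by simp
  qed
  then show ?thesis by (rule sums_summable)
qed

lemma distortion_ge:
  assumes f: "(\<lambda>u. f (sawpath u)) \<in> measurable (restrict_space borel {0..1}) (count_space UNIV)"
  shows "(\<Sum>i. (measure lebesgue (cell f i))\<^sup>2 / 6) \<le> distortion f"
proof -
  note cells = sets_cell[OF f] cell_subset
  have err_summable: "summable (\<lambda>i. LINT u:cell f i|lebesgue. recon_error (cell f i) u)"
    by (rule summable_comparison_test'[OF summable_measure_cell[OF f]])
      (use set_integral_recon_error_bounds[OF cells] in simp)
  have "summable (\<lambda>i. (measure lebesgue (cell f i))\<^sup>2 / 6)"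
    by (rule summable_comparison_test'[OF err_summable])
      (use set_integral_recon_error_ge[OF cells] in simp)
  then show ?thesis
    unfolding distortion_eq_suminf_cells[OF f]
    by (rule suminf_le[OF set_integral_recon_error_ge[OF cells] _ err_summable])
qed

lemma distortion_eq_of_intervals:
  assumes f: "(\<lambda>u. f (sawpath u)) \<in> measurable (restrict_space borel {0..1}) (count_space UNIV)"
    and iv: "\<forall>i. cell f i \<noteq> {} \<longrightarrow> is_interval (cell f i)"
  shows "distortion f = (\<Sum>i. (measure lebesgue (cell f i))\<^sup>2 / 6)"
proof -
  have "(LINT u:cell f i|lebesgue. recon_error (cell f i) u) = (measure lebesgue (cell f i))\<^sup>2 / 6" for i
    using set_integral_recon_error_interval[OF sets_cell[OF f] cell_subset] iv by blast
  then show ?thesis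
    unfolding distortion_eq_suminf_cells[OF f] by (rule suminf_cong)
qed

theorem mainTheorem4:
  shows "(\<forall>A. A \<in> sets lebesgue \<longrightarrow> A \<subseteq> {0..1} \<longrightarrow> measure lebesgue A > 0 \<longrightarrow>
            cond_mse A \<ge> measure lebesgue A / 6 \<and>
            (is_interval A \<longrightarrow> cond_mse A = measure lebesgue A / 6))
       \<and> (\<forall>f :: (real \<Rightarrow> real) \<Rightarrow> nat.
            (\<lambda>u. f (sawpath u)) \<in> measurable (restrict_space borel {0..1}) (count_space UNIV) \<longrightarrow>
            distortion f \<ge> (\<Sum>i. (measure lebesgue (cell f i))\<^sup>2 / 6) \<and>
            ((\<forall>i. cell f i \<noteq> {} \<longrightarrow> is_interval (cell f i)) \<longrightarrow>
               distortion f = (\<Sum>i. (measure lebesgue (cell f i))\<^sup>2 / 6)))"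
  using cond_mse_ge cond_mse_interval distortion_ge distortion_eq_of_intervals by blast

end
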